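(* Let $n\ge 16$ be even and let $W_{4,n}$ be the $4$-regular Kn\"odel graph. If $n\equiv 0\pmod{10}$ or $n\equiv 4 \pmod{10}$, then $W_{4,n}$ is $\gamma$-stable.
   Context: For an even integer $n\ge 2$ and $1\le\Delta\le\lfloor\log_2 n\rfloor$, the Kn\"odel graph $W_{\Delta,n}$ is the $\Delta$-regular bipartite graph on the $n$ vertices $(i,j)$, $i\in\{1,2\}$, $0\le j\le n/2-1$, in which for every $j$ the vertex $(1,j)$ is adjacent to the vertices $(2,(j+2^k-1)\bmod (n/2))$ for $k=0,1,\dots,\Delta-1$ (and there are no other edges); in particular $W_{4,n}$ is defined for even $n\ge 16$. A set $D$ of vertices of a graph $G$ is dominating if every vertex not in $D$ is adjacent to a vertex of $D$; $\gamma(G)$ is the minimum size of a dominating set. A graph $G$ is $\gamma$-stable if $\gamma(G-u)=\gamma(G)$ for every vertex $u$ of $G$, where $G-u$ is the graph obtained by deleting $u$. *)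

theory Defs
  imports Main
begin

(* A (simple, undirected) graph is given by a vertex set V and an adjacency
   relation E; only the restriction of E to V matters. *)

definition dominating :: "'a set \<Rightarrow> ('a \<Rightarrow> 'a \<Rightarrow> bool) \<Rightarrow> 'a set \<Rightarrow> bool" where
  "dominating V E D \<longleftrightarrow> D \<subseteq> V \<and> (\<forall>v\<in>V - D. \<exists>d\<in>D. E v d)"

(* domination number: minimum size of a dominating set (V assumed finite) *)
definition domination_number :: "'a set \<Rightarrow> ('a \<Rightarrow> 'a \<Rightarrow> bool) \<Rightarrow> nat" where
  "domination_number V E = Min {card D | D. dominating V E D}"

definition gamma_stable :: "'a set \<Rightarrow> ('a \<Rightarrow> 'a \<Rightarrow> bool) \<Rightarrow> bool" where
  "gamma_stable V E \<longleftrightarrow>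
     (\<forall>u\<in>V. domination_number (V - {u}) E = domination_number V E)"

definition knodel_vertices :: "nat \<Rightarrow> (nat \<times> nat) set" where
  "knodel_vertices n = {(i, j). i \<in> {1, 2} \<and> j < n div 2}"

definition knodel_edge0 :: "nat \<Rightarrow> nat \<Rightarrow> nat \<times> nat \<Rightarrow> nat \<times> nat \<Rightarrow> bool" where
  "knodel_edge0 \<Delta> n x y \<longleftrightarrow>
     fst x = 1 \<and> fst y = 2 \<and>
     (\<exists>k<\<Delta>. snd y = (snd x + 2 ^ k - 1) mod (n div 2))"

definition knodel_adj :: "nat \<Rightarrow> nat \<Rightarrow> nat \<times> nat \<Rightarrow> nat \<times> nat \<Rightarrow> bool" where
  "knodel_adj \<Delta> n x y \<longleftrightarrow> knodel_edge0 \<Delta> n x y \<or> knodel_edge0 \<Delta> n y x"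

end

theory Submission
  imports Defs "HOL-Number_Theory.Cong"
begin

(* Write m = n/2, so that (1, x) is adjacent to (2, (x + r) mod m) for the offsets r in {0, 1, 3, 7}.
   The translations (a, x) -> (a, x + c) and the reflection (a, x) -> (3 - a, m - 1 - x) are
   automorphisms of the graph.

   Lower bound: if D dominates W - u and has A vertices on side 1 and B on side 2, then the at least
   m - 1 side-2 vertices of W - u lie in D or in the 4-element neighbourhoods of the side-1 vertices
   of D, so m - 1 <= B + 4 A; by the reflection also m - 1 <= A + 4 B. For m = 5 t this gives
   |D| >= 2 t. For m = 5 t + 2, any t residues modulo m contain two whose distance is a difference
   of two offsets, so two of the neighbourhoods overlap and each bound improves by one as soon as
   A >= t (resp. B >= t); this forces |D| >= 2 t + 2.

   Upper bound: {(1, 5 i), (2, 5 i + 4) : i < t}, together with (1, 5 t + 1) and (2, 5 t) when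
   m = 5 t + 2, dominates W. Translated so that it misses u, it also dominates W - u; hence
   gamma(W - u) and gamma(W) both equal its size. *)

lemma dominating_remove_vertex:
  assumes "dominating V E D" "w \<notin> D"
  shows "dominating (V - {w}) E D"
  using assms unfolding dominating_def by auto

lemma dominating_image:
  assumes dom: "dominating V E D"
    and hom: "\<And>x y. x \<in> V \<Longrightarrow> y \<in> V \<Longrightarrow> E x y \<Longrightarrow> E (f x) (f y)"
  shows "dominating (f ` V) E (f ` D)"
  unfolding dominating_def
proof (intro conjI ballI)
  show "f ` D \<subseteq> f ` V" using dom unfolding dominating_def by auto
next
  fix v assume "v \<in> f ` V - f ` D"
  then obtain w where w: "w \<in> V - D" "v = f w" by blast
  with dom obtain d where "d \<in> D" "E w d" unfolding dominating_def by blast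
  moreover have "d \<in> V" using \<open>d \<in> D\<close> dom unfolding dominating_def by blast
  ultimately show "\<exists>d\<in>f ` D. E v d" using hom w by blast
qed

lemma domination_number_eqI:
  assumes "finite V" "dominating V E D" "card D \<le> g"
    and lower: "\<And>D. dominating V E D \<Longrightarrow> g \<le> card D"
  shows "domination_number V E = g"
  unfolding domination_number_def
proof (rule Min_eqI)
  have "{card D |D. dominating V E D} \<subseteq> card ` Pow V"
    unfolding dominating_def by blast
  then show "finite {card D |D. dominating V E D}"
    using \<open>finite V\<close> finite_subset by blast
  have "card D = g" using assms(3) lower[OF assms(2)] by simp
  then show "g \<in> {card D |D. dominating V E D}" using assms(2) by blast
qed (use lower in blast)

lemma gamma_stableI:
  assumes "finite V"
    and lower: "\<And>u D. u \<in> V \<Longrightarrow> dominating (V - {u}) E D \<Longrightarrow> g \<le> card D"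
    and avoiding: "\<And>u. u \<in> V \<Longrightarrow> \<exists>D. dominating V E D \<and> u \<notin> D \<and> card D \<le> g"
  shows "gamma_stable V E"
  unfolding gamma_stable_def
proof
  fix u assume "u \<in> V"
  then obtain D where D: "dominating V E D" "u \<notin> D" "card D \<le> g" using avoiding by blast
  have lower_V: "g \<le> card D'" if D': "dominating V E D'" for D'
  proof (cases "V \<subseteq> D'")
    case True
    have "dominating (V - {u}) E (V - {u})" unfolding dominating_def by blast
    then have "g \<le> card (V - {u})" by (rule lower[OF \<open>u \<in> V\<close>])
    also have "\<dots> \<le> card D'"
      using True D' \<open>finite V\<close> unfolding dominating_def by (simp add: card_mono subset_antisym)
    finally show ?thesis .
  next
    case False
    then obtain w where "w \<in> V" "w \<notin> D'" by blast
    then show ?thesis using lower[OF \<open>w \<in> V\<close> dominating_remove_vertex[OF D']] by simp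
  qed
  have "domination_number V E = g"
    by (rule domination_number_eqI[OF \<open>finite V\<close> D(1,3) lower_V])
  moreover have "domination_number (V - {u}) E = g"
    by (rule domination_number_eqI[OF _ dominating_remove_vertex[OF D(1,2)] D(3) lower[OF \<open>u \<in> V\<close>]])
      (use \<open>finite V\<close> in simp)
  ultimately show "domination_number (V - {u}) E = domination_number V E" by simp
qed

lemma card_UN_less_sum:
  assumes "finite I" "\<And>i. i \<in> I \<Longrightarrow> finite (F i)"
    and "a \<in> I" "b \<in> I" "a \<noteq> b" "F a \<inter> F b \<noteq> {}"
  shows "card (\<Union>i\<in>I. F i) < (\<Sum>i\<in>I. card (F i))"
proof -
  let ?U = "\<Union>i\<in>I - {a}. F i"
  have fin: "finite (F a)" "finite ?U" using assms by auto
  have "F a \<inter> ?U \<noteq> {}" using assms by blast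
  then have "card (F a \<inter> ?U) > 0" using fin by (simp add: card_gt_0_iff)
  then have "card (F a \<union> ?U) < card (F a) + card ?U"
    using card_Un_Int[OF fin] by linarith
  also have "card ?U \<le> (\<Sum>i\<in>I - {a}. card (F i))"
    using \<open>finite I\<close> by (simp add: card_UN_le)
  also have "card (F a) + (\<Sum>i\<in>I - {a}. card (F i)) = (\<Sum>i\<in>I. card (F i))"
    by (rule sum.remove[OF \<open>finite I\<close> \<open>a \<in> I\<close>, symmetric])
  moreover have "F a \<union> ?U = (\<Union>i\<in>I. F i)" using \<open>a \<in> I\<close> by blast
  ultimately show ?thesis by simp
qed

lemma mod_add_eq_mod_add_cases:
  fixes i j e e' m :: nat
  assumes eq: "(i + e) mod m = (j + e') mod m" and "i < m" "j < m"
  shows "e' \<le> e \<and> j = (i + (e - e')) mod m \<or> e < e' \<and> i = (j + (e' - e)) mod m"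
proof (cases "e' \<le> e")
  case True
  then have "[i + (e - e') + e' = j + e'] (mod m)" using eq by (simp add: cong_def)
  then have "[i + (e - e') = j] (mod m)" by (rule cong_add_rcancel_nat[THEN iffD1])
  then show ?thesis using True \<open>j < m\<close> by (simp add: cong_def)
next
  case False
  then have "[j + (e' - e) + e = i + e] (mod m)" using eq by (simp add: cong_def)
  then have "[j + (e' - e) = i] (mod m)" by (rule cong_add_rcancel_nat[THEN iffD1])
  then show ?thesis using False \<open>i < m\<close> by (simp add: cong_def)
qed

lemma add_mod_neq_self:
  fixes i d m :: nat
  assumes "0 < d" "d < m" "i < m"
  shows "(i + d) mod m \<noteq> i"
proof
  assume "(i + d) mod m = i"
  then have "[i + d = i + 0] (mod m)" using \<open>i < m\<close> by (simp add: cong_def)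
  then have "[d = 0] (mod m)" by (rule cong_add_lcancel_nat[THEN iffD1])
  then show False using assms(1,2) by (simp add: cong_def)
qed

lemma inj_on_add_mod:
  fixes i k m :: nat
  assumes "k \<le> m"
  shows "inj_on (\<lambda>e. (i + e) mod m) {..<k}"
proof (rule inj_onI)
  fix e e' assume "e \<in> {..<k}" "e' \<in> {..<k}" "(i + e) mod m = (i + e') mod m"
  then have "[i + e = i + e'] (mod m)" by (simp add: cong_def)
  then have "[e = e'] (mod m)" by (rule cong_add_lcancel_nat[THEN iffD1])
  then show "e = e'" using \<open>e \<in> {..<k}\<close> \<open>e' \<in> {..<k}\<close> assms by (simp add: cong_def)
qed

lemma add_mult_mod_mem_closed:
  fixes m :: nat
  assumes closed: "\<And>i. i \<in> S \<Longrightarrow> (i + c) mod m \<in> S" and "i \<in> S" "i < m"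
  shows "(i + c * k) mod m \<in> S"
proof (induction k)
  case 0
  then show ?case using assms by simp
next
  case (Suc k)
  have "(i + c * Suc k) mod m = (i + c * k + c) mod m" by (simp add: algebra_simps)
  also have "\<dots> = ((i + c * k) mod m + c) mod m" by (simp add: mod_add_left_eq)
  finally show ?case using closed[OF Suc] by simp
qed

lemma add_one_mod_mem_closed:
  fixes c m :: nat
  assumes "coprime c m" "S \<subseteq> {..<m}" and closed: "\<And>i. i \<in> S \<Longrightarrow> (i + c) mod m \<in> S"
    and "i \<in> S"
  shows "(i + 1) mod m \<in> S"
proof -
  obtain k where "[c * k = 1] (mod m)" using cong_solve_coprime_nat[OF \<open>coprime c m\<close>] by auto
  then have "(i + c * k) mod m = (i + 1) mod m" by (metis cong_def mod_add_right_eq)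
  moreover have "i < m" using assms(2,4) by blast
  ultimately show ?thesis using add_mult_mod_mem_closed[OF closed \<open>i \<in> S\<close>] by metis
qed

lemma mod_add_collision_in_gap_free_set:
  fixes m :: nat
  assumes gaps: "\<And>i d. i \<in> S \<Longrightarrow> d \<in> {1, 2, 3, 4, 6, 7} \<Longrightarrow> (i + d) mod m \<notin> S"
    and "S \<subseteq> {..<m}" "i \<in> S" "j \<in> S" "i \<noteq> j" "e < 8" "e' < 8"
    and "(i + e) mod m = (j + e') mod m"
  shows "e = e' + 5 \<and> j = (i + 5) mod m \<or> e' = e + 5 \<and> i = (j + 5) mod m"
proof -
  have spacing: "d = 5" if "k \<in> S" "l \<in> S" "k \<noteq> l" "d < 8" "l = (k + d) mod m" for k l d
  proof -
    have "d \<notin> {1, 2, 3, 4, 6, 7}" using gaps[OF that(1)] that(2,5) by blast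
    moreover have "k < m" using that(1) \<open>S \<subseteq> {..<m}\<close> by blast
    then have "d \<noteq> 0" using that(3,5) by (metis add_0_right mod_less)
    ultimately show ?thesis using that(4) by auto
  qed
  have "i < m" "j < m" using assms(2-4) by auto
  then consider "e' \<le> e" "j = (i + (e - e')) mod m" | "e < e'" "i = (j + (e' - e)) mod m"
    using mod_add_eq_mod_add_cases[OF assms(8)] by blast
  then show ?thesis
  proof cases
    case 1
    then have "e - e' = 5" using spacing assms(3-6) by simp
    then show ?thesis using 1 by simp
  next
    case 2
    then have "e' - e = 5" using spacing assms(3-5,7) by simp
    then show ?thesis using 2 by simp
  qed
qed

text \<open>The differences of the offsets {0, 1, 3, 7} are 1, 2, 3, 4, 6, 7; a set of residues avoiding
  them spaces its points at distance 5 or at least 8. The blocks of five consecutive residues starting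
  at its points are disjoint, and the block after a point whose spacing is not 5 extends by three
  more residues; such a point exists because 5 generates the residues modulo m.\<close>

lemma card_residues_avoiding_offset_gaps:
  fixes m :: nat and S :: "nat set"
  assumes "\<not> 5 dvd m" "7 < m" "S \<subseteq> {..<m}"
    and gaps: "\<And>i d. i \<in> S \<Longrightarrow> d \<in> {1, 2, 3, 4, 6, 7} \<Longrightarrow> (i + d) mod m \<notin> S"
  shows "5 * card S + 3 \<le> m"
proof (cases "S = {}")
  case True
  then show ?thesis using \<open>7 < m\<close> by simp
next
  case False
  have "coprime 5 m" using \<open>\<not> 5 dvd m\<close> by (intro prime_imp_coprime) simp_all
  have "\<exists>i0\<in>S. (i0 + 5) mod m \<notin> S"
  proof (rule ccontr)
    assume "\<not> ?thesis"
    then have "(i + 1) mod m \<in> S" if "i \<in> S" for i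
      using add_one_mod_mem_closed[OF \<open>coprime 5 m\<close> \<open>S \<subseteq> {..<m}\<close> _ that] by blast
    with False gaps[of _ 1] show False by auto
  qed
  then obtain i0 where "i0 \<in> S" and i0: "(i0 + 5) mod m \<notin> S" by blast
  define len :: "nat \<Rightarrow> nat" where "len i = 5 + (if i = i0 then 3 else 0)" for i
  define block where "block i = (\<lambda>e. (i + e) mod m) ` {..<len i}" for i
  have card_block: "card (block i) = len i" for i
    unfolding block_def using inj_on_add_mod[of "len i" m i] \<open>7 < m\<close>
    by (simp add: card_image len_def)
  have disjoint: "block i \<inter> block j = {}" if ij: "i \<in> S" "j \<in> S" "i \<noteq> j" for i j
  proof (rule ccontr)
    assume "block i \<inter> block j \<noteq> {}"
    then obtain e e' where e: "e < len i" "e' < len j" "(i + e) mod m = (j + e') mod m"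
      unfolding block_def by auto
    moreover have "len i \<le> 8" "len j \<le> 8" by (simp_all add: len_def)
    ultimately have "e = e' + 5 \<and> j = (i + 5) mod m \<or> e' = e + 5 \<and> i = (j + 5) mod m"
      using mod_add_collision_in_gap_free_set[OF gaps \<open>S \<subseteq> {..<m}\<close> ij] by simp
    moreover have "i = i0" if "5 \<le> e" using e(1) that by (auto simp: len_def split: if_splits)
    moreover have "j = i0" if "5 \<le> e'" using e(2) that by (auto simp: len_def split: if_splits)
    ultimately show False using i0 ij(1,2) by auto
  qed
  have "finite S" using \<open>S \<subseteq> {..<m}\<close> finite_subset by blast
  have "5 * card S + 3 = (\<Sum>i\<in>S. len i)"
    using \<open>finite S\<close> \<open>i0 \<in> S\<close> by (simp add: len_def sum.distrib)
  also have "\<dots> = card (\<Union>i\<in>S. block i)"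
    using card_UN_disjoint[OF \<open>finite S\<close>, of block] disjoint card_block
    by (simp add: block_def)
  also have "\<dots> \<le> m"
    by (rule card_mono[of "{..<m}", simplified]) (use \<open>7 < m\<close> in \<open>auto simp: block_def\<close>)
  finally show ?thesis .
qed

definition knodel_offsets :: "nat set" where
  "knodel_offsets = {0, 1, 3, 7}"

lemma knodel_offsets_eq: "knodel_offsets = (\<lambda>k. 2 ^ k - 1) ` {..<4}"
proof -
  have "{..<4::nat} = {0, 1, 2, 3}" by auto
  then show ?thesis by (simp add: knodel_offsets_def)
qed

lemma knodel_adj_4_iff:
  "knodel_adj 4 n (a, x) (b, y) \<longleftrightarrow>
     a = 1 \<and> b = 2 \<and> (\<exists>r\<in>knodel_offsets. y = (x + r) mod (n div 2)) \<or>
     a = 2 \<and> b = 1 \<and> (\<exists>r\<in>knodel_offsets. x = (y + r) mod (n div 2))"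
proof -
  have "x + 2 ^ k - 1 = x + (2 ^ k - 1)" for x k :: nat by simp
  then show ?thesis
    unfolding knodel_adj_def knodel_edge0_def knodel_offsets_eq by auto
qed

lemma knodel_offset_differences:
  "d \<in> {1, 2, 3, 4, 6, 7} \<Longrightarrow> \<exists>r\<in>knodel_offsets. \<exists>r'\<in>knodel_offsets. r = r' + d"
  unfolding knodel_offsets_def by (elim insertE) auto

lemma knodel_vertices_eq: "knodel_vertices n = {1, 2} \<times> {..<n div 2}"
  unfolding knodel_vertices_def by auto

definition knodel_side :: "(nat \<times> nat) set \<Rightarrow> nat \<Rightarrow> nat set" where
  "knodel_side D a = {x. (a, x) \<in> D}"

lemma knodel_side_subset:
  assumes "D \<subseteq> knodel_vertices n"
  shows "knodel_side D a \<subseteq> {..<n div 2}"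
proof
  fix x assume "x \<in> knodel_side D a"
  then have "(a, x) \<in> knodel_vertices n" using assms unfolding knodel_side_def by blast
  then show "x \<in> {..<n div 2}" unfolding knodel_vertices_def by simp
qed

lemma finite_knodel_side: "D \<subseteq> knodel_vertices n \<Longrightarrow> finite (knodel_side D a)"
  by (rule finite_subset[OF knodel_side_subset]) simp_all

lemma card_knodel_subset:
  assumes "D \<subseteq> knodel_vertices n"
  shows "card D = card (knodel_side D 1) + card (knodel_side D 2)"
proof -
  have "D = Sigma {1, 2} (knodel_side D)"
    using assms unfolding knodel_side_def knodel_vertices_eq by auto
  then have "card D = card (Sigma {1, 2} (knodel_side D))" by (rule arg_cong)
  also have "\<dots> = (\<Sum>a\<in>{1, 2}. card (knodel_side D a))"
    using finite_knodel_side[OF assms] by (intro card_SigmaI) auto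
  finally show ?thesis by simp
qed

definition knodel_shift :: "nat \<Rightarrow> nat \<Rightarrow> nat \<times> nat \<Rightarrow> nat \<times> nat" where
  "knodel_shift n c v = (fst v, (snd v + c) mod (n div 2))"

lemma knodel_shift_adj:
  assumes "knodel_adj 4 n v w"
  shows "knodel_adj 4 n (knodel_shift n c v) (knodel_shift n c w)"
proof -
  have shift: "(y + c) mod m = ((x + c) mod m + r) mod m" if "y = (x + r) mod m" for x y r m :: nat
  proof -
    have "(y + c) mod m = (x + r + c) mod m" unfolding that by (rule mod_add_left_eq)
    also have "x + r + c = x + c + r" by simp
    finally show ?thesis by (simp add: mod_add_left_eq)
  qed
  obtain a x b y where vw: "v = (a, x)" "w = (b, y)" by fastforce
  from assms consider r where "a = 1" "b = 2" "r \<in> knodel_offsets" "y = (x + r) mod (n div 2)"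
    | r where "a = 2" "b = 1" "r \<in> knodel_offsets" "x = (y + r) mod (n div 2)"
    unfolding vw knodel_adj_4_iff by blast
  then show ?thesis
  proof cases
    case 1
    then show ?thesis using shift[OF 1(4)] unfolding vw knodel_shift_def knodel_adj_4_iff by auto
  next
    case 2
    then show ?thesis using shift[OF 2(4)] unfolding vw knodel_shift_def knodel_adj_4_iff by auto
  qed
qed

lemma inj_on_knodel_shift: "inj_on (knodel_shift n c) (knodel_vertices n)"
proof (rule inj_onI)
  fix v w assume "v \<in> knodel_vertices n" "w \<in> knodel_vertices n"
    and eq: "knodel_shift n c v = knodel_shift n c w"
  then have "[snd v + c = snd w + c] (mod n div 2)" "fst v = fst w"
    unfolding knodel_shift_def cong_def by auto
  then have "[snd v = snd w] (mod n div 2)" "fst v = fst w"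
    by (simp_all add: cong_add_rcancel_nat)
  then show "v = w"
    using \<open>v \<in> _\<close> \<open>w \<in> _\<close> unfolding knodel_vertices_eq cong_def by (auto simp: prod_eq_iff)
qed

lemma knodel_shift_vertices: "knodel_shift n c ` knodel_vertices n = knodel_vertices n"
proof (rule endo_inj_surj)
  show "finite (knodel_vertices n)" unfolding knodel_vertices_eq by simp
  show "knodel_shift n c ` knodel_vertices n \<subseteq> knodel_vertices n"
    unfolding knodel_vertices_eq knodel_shift_def by auto
qed (rule inj_on_knodel_shift)

definition knodel_flip :: "nat \<Rightarrow> nat \<times> nat \<Rightarrow> nat \<times> nat" where
  "knodel_flip n v = (3 - fst v, n div 2 - 1 - snd v)"

lemma knodel_flip_flip: "v \<in> knodel_vertices n \<Longrightarrow> knodel_flip n (knodel_flip n v) = v"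
  unfolding knodel_flip_def knodel_vertices_eq by auto

lemma inj_on_knodel_flip: "inj_on (knodel_flip n) (knodel_vertices n)"
  by (rule inj_on_inverseI[of _ "knodel_flip n"]) (rule knodel_flip_flip)

lemma knodel_flip_vertices: "knodel_flip n ` knodel_vertices n = knodel_vertices n"
proof (rule endo_inj_surj)
  show "finite (knodel_vertices n)" unfolding knodel_vertices_eq by simp
  show "knodel_flip n ` knodel_vertices n \<subseteq> knodel_vertices n"
    unfolding knodel_vertices_eq knodel_flip_def by auto
qed (rule inj_on_knodel_flip)

lemma reflect_add_mod:
  fixes x y r m :: nat
  assumes "x < m" "y < m" "y = (x + r) mod m"
  shows "m - 1 - x = (m - 1 - y + r) mod m"
proof -
  have eq: "m - 1 - y + r + y = m - 1 - x + (x + r)" using \<open>x < m\<close> \<open>y < m\<close> by linarith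
  have "[m - 1 - y + r + y = m - 1 - x + (x + r)] (mod m)" unfolding eq by (rule cong_refl)
  also have "[m - 1 - x + (x + r) = m - 1 - x + y] (mod m)"
    using assms(3) by (intro cong_add) (simp_all add: cong_def)
  finally have "[m - 1 - y + r = m - 1 - x] (mod m)" by (simp add: cong_add_rcancel_nat)
  then show ?thesis using assms(1) by (simp add: cong_def)
qed

lemma knodel_flip_adj:
  assumes "v \<in> knodel_vertices n" "w \<in> knodel_vertices n" "knodel_adj 4 n v w"
  shows "knodel_adj 4 n (knodel_flip n v) (knodel_flip n w)"
proof -
  obtain a x b y where vw: "v = (a, x)" "w = (b, y)" by fastforce
  have "x < n div 2" "y < n div 2" using assms(1,2) unfolding vw knodel_vertices_def by auto
  from assms(3) consider r where "a = 1" "b = 2" "r \<in> knodel_offsets" "y = (x + r) mod (n div 2)"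
    | r where "a = 2" "b = 1" "r \<in> knodel_offsets" "x = (y + r) mod (n div 2)"
    unfolding vw knodel_adj_4_iff by blast
  then show ?thesis
  proof cases
    case 1
    then show ?thesis
      using reflect_add_mod[OF \<open>x < _\<close> \<open>y < _\<close> 1(4)]
      unfolding vw knodel_flip_def knodel_adj_4_iff by auto
  next
    case 2
    then show ?thesis
      using reflect_add_mod[OF \<open>y < _\<close> \<open>x < _\<close> 2(4)]
      unfolding vw knodel_flip_def knodel_adj_4_iff by auto
  qed
qed

lemma card_knodel_side_flip:
  assumes "D \<subseteq> knodel_vertices n" "a \<in> {1, 2}"
  shows "card (knodel_side (knodel_flip n ` D) a) = card (knodel_side D (3 - a))"
proof -
  have "knodel_side (knodel_flip n ` D) a = (\<lambda>x. n div 2 - 1 - x) ` knodel_side D (3 - a)"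
  proof (intro set_eqI iffI)
    fix y assume "y \<in> knodel_side (knodel_flip n ` D) a"
    then obtain b x where "(b, x) \<in> D" "(a, y) = knodel_flip n (b, x)"
      unfolding knodel_side_def by auto
    moreover have "b \<in> {1, 2}" using \<open>(b, x) \<in> D\<close> assms(1) unfolding knodel_vertices_def by auto
    ultimately show "y \<in> (\<lambda>x. n div 2 - 1 - x) ` knodel_side D (3 - a)"
      unfolding knodel_flip_def knodel_side_def by auto
  next
    fix y assume "y \<in> (\<lambda>x. n div 2 - 1 - x) ` knodel_side D (3 - a)"
    then obtain x where "(3 - a, x) \<in> D" "y = n div 2 - 1 - x" unfolding knodel_side_def by auto
    moreover have "knodel_flip n (3 - a, x) = (a, y)"
      using assms(2) \<open>y = _\<close> unfolding knodel_flip_def by auto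
    ultimately show "y \<in> knodel_side (knodel_flip n ` D) a"
      unfolding knodel_side_def by (metis image_eqI mem_Collect_eq)
  qed
  moreover have "inj_on (\<lambda>x. n div 2 - 1 - x) (knodel_side D (3 - a))"
  proof (rule inj_onI)
    fix x y assume "x \<in> knodel_side D (3 - a)" "y \<in> knodel_side D (3 - a)"
      and "n div 2 - 1 - x = n div 2 - 1 - y"
    moreover have "knodel_side D (3 - a) \<subseteq> {..<n div 2}" by (rule knodel_side_subset[OF assms(1)])
    ultimately have "x < n div 2" "y < n div 2" "n div 2 - 1 - x = n div 2 - 1 - y" by auto
    then show "x = y" by linarith
  qed
  ultimately show ?thesis by (simp add: card_image)
qed

definition knodel_nbrs :: "nat \<Rightarrow> nat \<Rightarrow> nat set" where
  "knodel_nbrs n x = (\<lambda>r. (x + r) mod (n div 2)) ` knodel_offsets"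

lemma finite_knodel_nbrs: "finite (knodel_nbrs n x)"
  unfolding knodel_nbrs_def knodel_offsets_def by simp

lemma card_knodel_nbrs_le: "card (knodel_nbrs n x) \<le> 4"
proof -
  have "card (knodel_nbrs n x) \<le> card knodel_offsets"
    unfolding knodel_nbrs_def by (rule card_image_le) (simp add: knodel_offsets_def)
  then show ?thesis by (simp add: knodel_offsets_def)
qed

lemma sum_card_knodel_nbrs_le: "(\<Sum>x\<in>S. card (knodel_nbrs n x)) \<le> 4 * card S"
  using sum_bounded_above[of S "\<lambda>x. card (knodel_nbrs n x)" 4] card_knodel_nbrs_le by simp

lemma card_UN_knodel_nbrs_le:
  assumes "finite S"
  shows "card (\<Union>x\<in>S. knodel_nbrs n x) \<le> 4 * card S"
  using card_UN_le[OF assms, of "knodel_nbrs n"] sum_card_knodel_nbrs_le[of n S] by linarith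

lemma knodel_nbrs_overlap:
  assumes "d \<in> {1, 2, 3, 4, 6, 7}"
  shows "knodel_nbrs n x \<inter> knodel_nbrs n ((x + d) mod (n div 2)) \<noteq> {}"
proof -
  obtain r r' where r: "r \<in> knodel_offsets" "r' \<in> knodel_offsets" "r = r' + d"
    using knodel_offset_differences[OF assms] by blast
  have "((x + d) mod (n div 2) + r') mod (n div 2) = (x + d + r') mod (n div 2)"
    by (rule mod_add_left_eq)
  also have "x + d + r' = x + r" using r(3) by simp
  finally have "(x + r) mod (n div 2) \<in> knodel_nbrs n ((x + d) mod (n div 2))"
    unfolding knodel_nbrs_def using r(2) by (metis image_eqI)
  moreover have "(x + r) mod (n div 2) \<in> knodel_nbrs n x"
    unfolding knodel_nbrs_def using r(1) by (rule imageI)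
  ultimately show ?thesis by blast
qed

lemma card_UN_knodel_nbrs_less:
  assumes m: "n div 2 = 5 * t + 2" and "2 \<le> t" and S: "S \<subseteq> {..<n div 2}" "t \<le> card S"
  shows "card (\<Union>x\<in>S. knodel_nbrs n x) < 4 * card S"
proof -
  have "\<not> 5 dvd n div 2" "7 < n div 2" using m \<open>2 \<le> t\<close> by presburger+
  moreover have "\<not> 5 * card S + 3 \<le> n div 2" using m S(2) by linarith
  ultimately obtain i d where i: "i \<in> S" "d \<in> {1, 2, 3, 4, 6, 7}" "(i + d) mod (n div 2) \<in> S"
    using card_residues_avoiding_offset_gaps[OF _ _ S(1)] by blast
  have "(i + d) mod (n div 2) \<noteq> i"
    using i S(1) \<open>7 < n div 2\<close> by (intro add_mod_neq_self) auto
  have "finite S" using S(1) finite_subset by blast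
  have "card (\<Union>x\<in>S. knodel_nbrs n x) < (\<Sum>x\<in>S. card (knodel_nbrs n x))"
    using \<open>(i + d) mod _ \<noteq> i\<close> knodel_nbrs_overlap[OF i(2)]
    by (intro card_UN_less_sum[OF \<open>finite S\<close> finite_knodel_nbrs i(1) i(3)]) auto
  also have "\<dots> \<le> 4 * card S" by (rule sum_card_knodel_nbrs_le)
  finally show ?thesis .
qed

lemma knodel_side2_cover:
  assumes "dominating V' (knodel_adj 4 n) D"
  shows "knodel_side V' 2 \<subseteq> knodel_side D 2 \<union> (\<Union>x\<in>knodel_side D 1. knodel_nbrs n x)"
proof
  fix y assume "y \<in> knodel_side V' 2"
  show "y \<in> knodel_side D 2 \<union> (\<Union>x\<in>knodel_side D 1. knodel_nbrs n x)"
  proof (cases "(2, y) \<in> D")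
    case True
    then show ?thesis by (simp add: knodel_side_def)
  next
    case False
    with assms \<open>y \<in> knodel_side V' 2\<close> obtain b x where "(b, x) \<in> D" "knodel_adj 4 n (2, y) (b, x)"
      unfolding dominating_def knodel_side_def by fast
    then have "(1, x) \<in> D" "\<exists>r\<in>knodel_offsets. y = (x + r) mod (n div 2)"
      by (auto simp: knodel_adj_4_iff)
    then show ?thesis unfolding knodel_side_def knodel_nbrs_def by blast
  qed
qed

lemma knodel_minus_vertex_side2_bound:
  assumes "u \<in> knodel_vertices n" "dominating (knodel_vertices n - {u}) (knodel_adj 4 n) D"
  shows "n div 2 \<le> card (knodel_side D 2) + card (\<Union>x\<in>knodel_side D 1. knodel_nbrs n x) + 1"
proof -
  have "D \<subseteq> knodel_vertices n" using assms(2) unfolding dominating_def by blast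
  then have fin: "finite (knodel_side D 2)" "finite (\<Union>x\<in>knodel_side D 1. knodel_nbrs n x)"
    using finite_knodel_side finite_knodel_nbrs by auto
  have "{..<n div 2} - {snd u} \<subseteq> knodel_side (knodel_vertices n - {u}) 2"
    unfolding knodel_side_def knodel_vertices_def by auto
  then have "card ({..<n div 2} - {snd u}) \<le> card (knodel_side (knodel_vertices n - {u}) 2)"
    by (intro card_mono finite_knodel_side) auto
  then have "n div 2 \<le> card (knodel_side (knodel_vertices n - {u}) 2) + 1"
    by (simp add: card_Diff_singleton_if split: if_splits)
  also have "card (knodel_side (knodel_vertices n - {u}) 2)
      \<le> card (knodel_side D 2 \<union> (\<Union>x\<in>knodel_side D 1. knodel_nbrs n x))"
    using fin by (intro card_mono knodel_side2_cover[OF assms(2)]) simp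
  also have "\<dots> \<le> card (knodel_side D 2) + card (\<Union>x\<in>knodel_side D 1. knodel_nbrs n x)"
    by (rule card_Un_le)
  finally show ?thesis by simp
qed

text \<open>Here B is the side-1 part of the reflected dominating set; it is as large as the side-2 part
  of D.\<close>

lemma knodel_minus_vertex_side_bounds:
  assumes "u \<in> knodel_vertices n" "dominating (knodel_vertices n - {u}) (knodel_adj 4 n) D"
  obtains A B where "card D = card A + card B" "A \<subseteq> {..<n div 2}" "B \<subseteq> {..<n div 2}"
    "n div 2 \<le> card B + card (\<Union>x\<in>A. knodel_nbrs n x) + 1"
    "n div 2 \<le> card A + card (\<Union>x\<in>B. knodel_nbrs n x) + 1"
proof -
  let ?V = "knodel_vertices n" and ?D' = "knodel_flip n ` D"
  have DV: "D \<subseteq> ?V" using assms(2) unfolding dominating_def by blast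
  then have D'V: "?D' \<subseteq> ?V" using knodel_flip_vertices by blast
  have "knodel_flip n ` (?V - {u}) = ?V - {knodel_flip n u}"
    using inj_on_image_set_diff[OF inj_on_knodel_flip, of ?V "{u}"] knodel_flip_vertices assms(1)
    by simp
  moreover have "dominating (knodel_flip n ` (?V - {u})) (knodel_adj 4 n) ?D'"
    using assms(2) by (rule dominating_image) (simp add: knodel_flip_adj)
  ultimately have "dominating (?V - {knodel_flip n u}) (knodel_adj 4 n) ?D'" by simp
  moreover have "knodel_flip n u \<in> ?V" using assms(1) knodel_flip_vertices by blast
  ultimately have "n div 2 \<le> card (knodel_side ?D' 2) + card (\<Union>x\<in>knodel_side ?D' 1. knodel_nbrs n x) + 1"
    by (rule knodel_minus_vertex_side2_bound[rotated])
  moreover have "card (knodel_side ?D' 2) = card (knodel_side D 1)"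
    "card (knodel_side ?D' 1) = card (knodel_side D 2)"
    using card_knodel_side_flip[OF DV] by simp_all
  ultimately show thesis
    using that[of "knodel_side D 1" "knodel_side ?D' 1"] card_knodel_subset[OF DV]
      knodel_minus_vertex_side2_bound[OF assms] knodel_side_subset[OF DV] knodel_side_subset[OF D'V]
    by simp
qed

lemma knodel_domination_minus_vertex_ge_5t:
  assumes "n div 2 = 5 * t" "u \<in> knodel_vertices n"
    and "dominating (knodel_vertices n - {u}) (knodel_adj 4 n) D"
  shows "2 * t \<le> card D"
proof -
  obtain A B where AB: "card D = card A + card B" "A \<subseteq> {..<n div 2}" "B \<subseteq> {..<n div 2}"
    "n div 2 \<le> card B + card (\<Union>x\<in>A. knodel_nbrs n x) + 1"
    "n div 2 \<le> card A + card (\<Union>x\<in>B. knodel_nbrs n x) + 1"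
    using knodel_minus_vertex_side_bounds[OF assms(2,3)] .
  have "card (\<Union>x\<in>A. knodel_nbrs n x) \<le> 4 * card A" "card (\<Union>x\<in>B. knodel_nbrs n x) \<le> 4 * card B"
    using AB(2,3) finite_subset by (blast intro: card_UN_knodel_nbrs_le)+
  then show ?thesis using AB(1,4,5) assms(1) by linarith
qed

lemma knodel_domination_minus_vertex_ge_5t2:
  assumes m: "n div 2 = 5 * t + 2" and "2 \<le> t" and "u \<in> knodel_vertices n"
    and "dominating (knodel_vertices n - {u}) (knodel_adj 4 n) D"
  shows "2 * t + 2 \<le> card D"
proof -
  obtain A B where AB: "card D = card A + card B" "A \<subseteq> {..<n div 2}" "B \<subseteq> {..<n div 2}"
    "n div 2 \<le> card B + card (\<Union>x\<in>A. knodel_nbrs n x) + 1"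
    "n div 2 \<le> card A + card (\<Union>x\<in>B. knodel_nbrs n x) + 1"
    using knodel_minus_vertex_side_bounds[OF assms(3,4)] .
  have le: "card (\<Union>x\<in>S. knodel_nbrs n x) \<le> 4 * card S" if "S \<subseteq> {..<n div 2}" for S
    using card_UN_knodel_nbrs_le finite_subset[OF that] by blast
  note less = card_UN_knodel_nbrs_less[OF m \<open>2 \<le> t\<close>]
  show ?thesis
  proof (rule ccontr)
    assume "\<not> 2 * t + 2 \<le> card D"
    then have small: "card A + card B \<le> 2 * t + 1" using AB(1) by linarith
    consider "card A < t" | "card B < t" | "t \<le> card A" "t \<le> card B" by linarith
    then show False
    proof cases
      case 1
      then show False using le[OF AB(2)] AB(4) small m by linarith
    next
      case 2
      then show False using le[OF AB(3)] AB(5) small m by linarith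
    next
      case 3
      then show False
        using less[OF AB(2) 3(1)] less[OF AB(3) 3(2)] AB(4,5) small m
        by (cases "card A \<le> t") linarith+
    qed
  qed
qed

lemma knodel_dominatingI:
  assumes "D \<subseteq> knodel_vertices n"
    and side1: "\<And>x. x < n div 2 \<Longrightarrow> (1, x) \<notin> D \<Longrightarrow>
      \<exists>r\<in>knodel_offsets. (2, (x + r) mod (n div 2)) \<in> D"
    and side2: "\<And>y. y < n div 2 \<Longrightarrow> (2, y) \<notin> D \<Longrightarrow>
      \<exists>x. \<exists>r\<in>knodel_offsets. (1, x) \<in> D \<and> y = (x + r) mod (n div 2)"
  shows "dominating (knodel_vertices n) (knodel_adj 4 n) D"
  unfolding dominating_def
proof (intro conjI ballI)
  fix v assume "v \<in> knodel_vertices n - D"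
  then obtain a x where v: "v = (a, x)" "a = 1 \<or> a = 2" "x < n div 2" "(a, x) \<notin> D"
    unfolding knodel_vertices_def by blast
  from v(2) show "\<exists>d\<in>D. knodel_adj 4 n v d"
  proof
    assume "a = 1"
    then obtain r where "r \<in> knodel_offsets" "(2, (x + r) mod (n div 2)) \<in> D"
      using side1 v(3,4) by blast
    then show ?thesis
      unfolding v(1) \<open>a = 1\<close> by (intro bexI[of _ "(2, (x + r) mod (n div 2))"]) (auto simp: knodel_adj_4_iff)
  next
    assume "a = 2"
    then obtain x' r where "r \<in> knodel_offsets" "(1, x') \<in> D" "x = (x' + r) mod (n div 2)"
      using side2 v(3,4) by blast
    then show ?thesis
      unfolding v(1) \<open>a = 2\<close> by (intro bexI[of _ "(1, x')"]) (auto simp: knodel_adj_4_iff)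
  qed
qed (rule assms(1))

definition knodel_base :: "nat \<Rightarrow> (nat \<times> nat) set" where
  "knodel_base t = {(a, x). (a = 1 \<and> x mod 5 = 0 \<or> a = 2 \<and> x mod 5 = 4) \<and> x < 5 * t}"

lemma card_knodel_base: "card (knodel_base t) \<le> 2 * t"
proof -
  let ?B1 = "(\<lambda>i. (1::nat, 5 * i)) ` {..<t}" and ?B2 = "(\<lambda>i. (2::nat, 5 * i + 4)) ` {..<t}"
  have "knodel_base t \<subseteq> ?B1 \<union> ?B2"
  proof
    fix v assume "v \<in> knodel_base t"
    then obtain a x where v: "v = (a, x)" "a = 1 \<and> x mod 5 = 0 \<or> a = 2 \<and> x mod 5 = 4" "x < 5 * t"
      by (cases v) (simp add: knodel_base_def)
    have "x div 5 \<in> {..<t}" using v(3) by simp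
    from v(2) show "v \<in> ?B1 \<union> ?B2"
    proof
      assume "a = 1 \<and> x mod 5 = 0"
      then have "v = (1, 5 * (x div 5))" using v(1) mult_div_mod_eq[of 5 x] by auto
      then show ?thesis using \<open>x div 5 \<in> _\<close> by blast
    next
      assume "a = 2 \<and> x mod 5 = 4"
      then have "v = (2, 5 * (x div 5) + 4)" using v(1) mult_div_mod_eq[of 5 x] by auto
      then show ?thesis using \<open>x div 5 \<in> _\<close> by blast
    qed
  qed
  then have "card (knodel_base t) \<le> card (?B1 \<union> ?B2)" by (intro card_mono) simp_all
  also have "\<dots> \<le> card ?B1 + card ?B2" by (rule card_Un_le)
  also have "\<dots> \<le> t + t"
    using card_image_le[of "{..<t}" "\<lambda>i. (1::nat, 5 * i)"] card_image_le[of "{..<t}" "\<lambda>i. (2::nat, 5 * i + 4)"]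
    by simp
  finally show ?thesis by simp
qed

lemma knodel_base_side1:
  assumes "x < 5 * t"
  shows "x mod 5 = 0 \<or> (\<exists>r\<in>knodel_offsets. x + r < 5 * t \<and> (x + r) mod 5 = 4) \<or> x + 3 = 5 * t"
proof -
  define q \<rho> where "q = x div 5" and "\<rho> = x mod 5"
  have "x = 5 * q + \<rho>" "\<rho> < 5" "q < t" unfolding q_def \<rho>_def using assms by simp_all
  moreover have "\<rho> = 0 \<or> \<rho> = 1 \<or> \<rho> = 2 \<or> \<rho> = 3 \<or> \<rho> = 4" using \<open>\<rho> < 5\<close> by linarith
  ultimately show ?thesis
    unfolding knodel_offsets_def by (elim disjE) (simp_all, presburger+)
qed

lemma knodel_base_side2:
  "y mod 5 = 4 \<or> (\<exists>r\<in>knodel_offsets. r \<le> y \<and> (y - r) mod 5 = 0) \<or> y = 2"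
proof -
  define q \<rho> where "q = y div 5" and "\<rho> = y mod 5"
  have "y = 5 * q + \<rho>" "\<rho> < 5" unfolding q_def \<rho>_def by simp_all
  moreover have "\<rho> = 0 \<or> \<rho> = 1 \<or> \<rho> = 2 \<or> \<rho> = 3 \<or> \<rho> = 4" using \<open>\<rho> < 5\<close> by linarith
  ultimately show ?thesis
    unfolding knodel_offsets_def by (elim disjE) (simp_all, presburger+)
qed

lemma knodel_base_subset: "5 * t \<le> n div 2 \<Longrightarrow> knodel_base t \<subseteq> knodel_vertices n"
  unfolding knodel_base_def knodel_vertices_def by auto

lemma knodel_base_dominating:
  assumes m: "n div 2 = 5 * t" and "1 \<le> t"
  shows "dominating (knodel_vertices n) (knodel_adj 4 n) (knodel_base t)"
proof (rule knodel_dominatingI)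
  show "knodel_base t \<subseteq> knodel_vertices n" using m by (intro knodel_base_subset) simp
next
  fix x assume "x < n div 2" "(1, x) \<notin> knodel_base t"
  then consider r where "r \<in> knodel_offsets" "x + r < 5 * t" "(x + r) mod 5 = 4" | "x + 3 = 5 * t"
    using knodel_base_side1[of x t] m by (auto simp: knodel_base_def)
  then show "\<exists>r\<in>knodel_offsets. (2, (x + r) mod (n div 2)) \<in> knodel_base t"
  proof cases
    case 1
    then show ?thesis unfolding m knodel_base_def by (intro bexI[of _ r]) auto
  next
    case 2
    then have "x + 7 = 4 + n div 2" "4 < n div 2" using m \<open>1 \<le> t\<close> by linarith+
    then have "(x + 7) mod (n div 2) = 4" by (metis mod_add_self2 mod_less)
    then show ?thesis using \<open>1 \<le> t\<close> unfolding knodel_base_def knodel_offsets_def by auto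
  qed
next
  fix y assume "y < n div 2" "(2, y) \<notin> knodel_base t"
  then consider r where "r \<in> knodel_offsets" "r \<le> y" "(y - r) mod 5 = 0" | "y = 2"
    using knodel_base_side2[of y] m by (auto simp: knodel_base_def)
  then show "\<exists>x. \<exists>r\<in>knodel_offsets. (1, x) \<in> knodel_base t \<and> y = (x + r) mod (n div 2)"
  proof cases
    case 1
    then show ?thesis using \<open>y < n div 2\<close> m by (intro exI[of _ "y - r"] bexI[of _ r]) (auto simp: knodel_base_def)
  next
    case 2
    have "5 * t - 5 + 7 = 2 + n div 2" "2 < n div 2" using m \<open>1 \<le> t\<close> by linarith+
    then have "(5 * t - 5 + 7) mod (n div 2) = 2" by (metis mod_add_self2 mod_less)
    then show ?thesis using 2 \<open>1 \<le> t\<close>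
      by (intro exI[of _ "5 * t - 5"] bexI[of _ 7]) (auto simp: knodel_base_def knodel_offsets_def)
  qed
qed

definition knodel_base_extended :: "nat \<Rightarrow> (nat \<times> nat) set" where
  "knodel_base_extended t = knodel_base t \<union> {(1, 5 * t + 1), (2, 5 * t)}"

lemma card_knodel_base_extended: "card (knodel_base_extended t) \<le> 2 * t + 2"
proof -
  have "card (knodel_base_extended t) \<le> card (knodel_base t) + card {(1::nat, 5 * t + 1), (2::nat, 5 * t)}"
    unfolding knodel_base_extended_def by (rule card_Un_le)
  also have "card {(1::nat, 5 * t + 1), (2::nat, 5 * t)} \<le> 2" by (simp add: card_insert_if)
  finally show ?thesis using card_knodel_base[of t] by simp
qed

lemma knodel_base_extended_side1:
  assumes m: "n div 2 = 5 * t + 2" and x: "x < n div 2" "(1, x) \<notin> knodel_base_extended t"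
  shows "\<exists>r\<in>knodel_offsets. (2, (x + r) mod (n div 2)) \<in> knodel_base_extended t"
proof -
  have "(\<exists>r\<in>knodel_offsets. x + r < 5 * t \<and> (x + r) mod 5 = 4) \<or> (\<exists>r\<in>knodel_offsets. x + r = 5 * t)"
  proof (cases "x < 5 * t")
    case True
    moreover have "x mod 5 \<noteq> 0" using x(2) True by (simp add: knodel_base_extended_def knodel_base_def)
    ultimately show ?thesis using knodel_base_side1[OF True] by (auto simp: knodel_offsets_def)
  next
    case False
    then have "x + 0 = 5 * t" using x m by (auto simp: knodel_base_extended_def)
    then show ?thesis by (auto simp: knodel_offsets_def)
  qed
  then obtain r where r: "r \<in> knodel_offsets" "(2, x + r) \<in> knodel_base_extended t" "x + r < n div 2"
  proof (elim disjE bexE conjE)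
    fix r assume "r \<in> knodel_offsets" "x + r < 5 * t" "(x + r) mod 5 = 4"
    then show thesis using that[of r] m by (simp add: knodel_base_extended_def knodel_base_def)
  next
    fix r assume "r \<in> knodel_offsets" "x + r = 5 * t"
    then show thesis using that[of r] m by (simp add: knodel_base_extended_def)
  qed
  moreover have "(x + r) mod (n div 2) = x + r" using r(3) by simp
  ultimately show ?thesis by (intro bexI[of _ r]) simp_all
qed

lemma knodel_base_extended_side2:
  assumes m: "n div 2 = 5 * t + 2" and "1 \<le> t"
    and y: "y < n div 2" "(2, y) \<notin> knodel_base_extended t"
  shows "\<exists>x. \<exists>r\<in>knodel_offsets. (1, x) \<in> knodel_base_extended t \<and> y = (x + r) mod (n div 2)"
proof -
  have "(\<exists>r\<in>knodel_offsets. r \<le> y \<and> y - r < 5 * t \<and> (y - r) mod 5 = 0) \<or> y = 2 \<or> y = 5 * t + 1"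
  proof (cases "y < 5 * t")
    case True
    moreover have "y mod 5 \<noteq> 4" using y(2) True by (simp add: knodel_base_extended_def knodel_base_def)
    ultimately show ?thesis using knodel_base_side2[of y] by auto
  next
    case False
    then show ?thesis using y m by (auto simp: knodel_base_extended_def)
  qed
  then show ?thesis
  proof (elim disjE bexE conjE)
    fix r assume "r \<in> knodel_offsets" "r \<le> y" "y - r < 5 * t" "(y - r) mod 5 = 0"
    then show ?thesis using y(1)
      by (intro exI[of _ "y - r"] bexI[of _ r]) (simp_all add: knodel_base_extended_def knodel_base_def)
  next
    assume "y = 2"
    have "5 * t + 1 + 3 = 2 + n div 2" "2 < n div 2" using m \<open>1 \<le> t\<close> by linarith+
    then have "y = (5 * t + 1 + 3) mod (n div 2)" using \<open>y = 2\<close> by (metis mod_add_self2 mod_less)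
    then show ?thesis
      by (intro exI[of _ "5 * t + 1"] bexI[of _ 3]) (simp_all add: knodel_base_extended_def knodel_offsets_def)
  next
    assume "y = 5 * t + 1"
    then show ?thesis using y(1)
      by (intro exI[of _ "5 * t + 1"] bexI[of _ 0]) (simp_all add: knodel_base_extended_def knodel_offsets_def)
  qed
qed

lemma knodel_base_extended_dominating:
  assumes m: "n div 2 = 5 * t + 2" and "1 \<le> t"
  shows "dominating (knodel_vertices n) (knodel_adj 4 n) (knodel_base_extended t)"
proof (rule knodel_dominatingI)
  show "knodel_base_extended t \<subseteq> knodel_vertices n"
    using knodel_base_subset[of t n] m unfolding knodel_base_extended_def knodel_vertices_def by auto
qed (use knodel_base_extended_side1[OF m] knodel_base_extended_side2[OF m \<open>1 \<le> t\<close>] in blast)+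

lemma knodel_dominating_avoiding:
  assumes dom: "dominating (knodel_vertices n) (knodel_adj 4 n) D0"
    and "(1, x1) \<in> knodel_vertices n - D0" "(2, x2) \<in> knodel_vertices n - D0"
    and "u \<in> knodel_vertices n"
  shows "\<exists>D. dominating (knodel_vertices n) (knodel_adj 4 n) D \<and> u \<notin> D \<and> card D \<le> card D0"
proof -
  let ?V = "knodel_vertices n"
  obtain a y where u: "u = (a, y)" "a = 1 \<or> a = 2" "y < n div 2"
    using assms(4) unfolding knodel_vertices_def by blast
  define x where "x = (if a = 1 then x1 else x2)"
  have w: "(a, x) \<in> ?V - D0" using assms(2,3) u(2) unfolding x_def by auto
  then have "x < n div 2" unfolding knodel_vertices_def by simp
  define c where "c = y + n div 2 - x"
  have "x + c = y + n div 2" unfolding c_def using \<open>x < n div 2\<close> by simp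
  then have shift_w: "knodel_shift n c (a, x) = u" unfolding knodel_shift_def u(1) using u(3) by simp
  have D0V: "D0 \<subseteq> ?V" using dom unfolding dominating_def by blast
  let ?D = "knodel_shift n c ` D0"
  have "dominating (knodel_shift n c ` ?V) (knodel_adj 4 n) ?D"
    by (rule dominating_image[OF dom]) (rule knodel_shift_adj)
  then have "dominating ?V (knodel_adj 4 n) ?D" unfolding knodel_shift_vertices .
  moreover have "u \<notin> ?D"
  proof
    assume "u \<in> ?D"
    then obtain d where "d \<in> D0" "knodel_shift n c d = knodel_shift n c (a, x)" using shift_w by auto
    then have "d = (a, x)" using inj_on_knodel_shift[THEN inj_onD] D0V w by blast
    then show False using \<open>d \<in> D0\<close> w by blast
  qed
  moreover have "finite D0" using D0V by (rule finite_subset) (simp add: knodel_vertices_eq)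
  then have "card ?D \<le> card D0" by (rule card_image_le)
  ultimately show ?thesis by blast
qed

lemma knodel_gamma_stableI:
  assumes "dominating (knodel_vertices n) (knodel_adj 4 n) D0"
    and "(1, x1) \<in> knodel_vertices n - D0" "(2, x2) \<in> knodel_vertices n - D0"
    and "\<And>u D. u \<in> knodel_vertices n \<Longrightarrow> dominating (knodel_vertices n - {u}) (knodel_adj 4 n) D \<Longrightarrow>
      card D0 \<le> card D"
  shows "gamma_stable (knodel_vertices n) (knodel_adj 4 n)"
proof (rule gamma_stableI[where g = "card D0"])
  show "finite (knodel_vertices n)" unfolding knodel_vertices_eq by simp
qed (use assms knodel_dominating_avoiding in blast)+

lemma knodel_gamma_stable_5t:
  assumes m: "n div 2 = 5 * t" and "2 \<le> t"
  shows "gamma_stable (knodel_vertices n) (knodel_adj 4 n)"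
proof (rule knodel_gamma_stableI[OF knodel_base_dominating[OF m]])
  show "(1, 1) \<in> knodel_vertices n - knodel_base t" "(2, 0) \<in> knodel_vertices n - knodel_base t"
    using m \<open>2 \<le> t\<close> by (auto simp: knodel_vertices_def knodel_base_def)
  show "card (knodel_base t) \<le> card D"
    if "u \<in> knodel_vertices n" "dominating (knodel_vertices n - {u}) (knodel_adj 4 n) D" for u D
    using card_knodel_base[of t] knodel_domination_minus_vertex_ge_5t[OF m that] by linarith
qed (use \<open>2 \<le> t\<close> in simp)

lemma knodel_gamma_stable_5t2:
  assumes m: "n div 2 = 5 * t + 2" and "2 \<le> t"
  shows "gamma_stable (knodel_vertices n) (knodel_adj 4 n)"
proof (rule knodel_gamma_stableI[OF knodel_base_extended_dominating[OF m]])
  show "(1, 1) \<in> knodel_vertices n - knodel_base_extended t"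
    "(2, 0) \<in> knodel_vertices n - knodel_base_extended t"
    using m \<open>2 \<le> t\<close> by (auto simp: knodel_vertices_def knodel_base_extended_def knodel_base_def)
  show "card (knodel_base_extended t) \<le> card D"
    if "u \<in> knodel_vertices n" "dominating (knodel_vertices n - {u}) (knodel_adj 4 n) D" for u D
    using card_knodel_base_extended[of t] knodel_domination_minus_vertex_ge_5t2[OF m \<open>2 \<le> t\<close> that]
    by linarith
qed (use \<open>2 \<le> t\<close> in simp)

theorem lemma4p2:
  fixes n :: nat
  assumes "even n" and "n \<ge> 16"
    and "n mod 10 = 0 \<or> n mod 10 = 4"
  shows "gamma_stable (knodel_vertices n) (knodel_adj 4 n)"
  using assms(3)
proof
  assume "n mod 10 = 0"
  then have "n div 2 = 5 * (n div 10)" "2 \<le> n div 10" using assms(2) by presburger+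
  then show ?thesis by (rule knodel_gamma_stable_5t)
next
  assume "n mod 10 = 4"
  then have "n div 2 = 5 * (n div 10) + 2" "2 \<le> n div 10" using assms(2) by presburger+
  then show ?thesis by (rule knodel_gamma_stable_5t2)
qed

end
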